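(* Let $\mu=\prod_{i=1}^d\mu_i$ be a product probability measure on $\mathbb{R}^d$, where $\mathrm{d}\mu_i(x_i)=\rho_i(|x_i|)\,\mathrm{d}x_i$ with $\rho_i:[0,\infty)\to(0,\infty)$ continuous. For $i=1,\dots,d$ let $\phi_i:[0,\infty)\to[0,\infty)$ be continuous and strictly increasing with $\phi_i(0)=0$, and set $B=\{x\in\mathbb{R}^d:\ \phi_1(|x_1|)+\cdots+\phi_d(|x_d|)\le1\}$ (which need not be convex). Then for every $f\in\bar{\mathcal{C}}_d$, $\int f\mathbf{1}_B\,\mathrm{d}\mu\ge\big(\int f\,\mathrm{d}\mu\big)\mu(B)$.
   Context: $\mathcal{C}_1$ denotes the set of continuous compactly supported functions $g:\mathbb{R}\to[0,\infty)$ such that for every $c>0$ the set $\{t: g(t)>c\}$ is convex, and $g(t)\le g(0)$ for all $t\in\mathbb{R}$. $\bar{\mathcal{C}}_d$ denotes the set of continuous compactly supported functions $f:\mathbb{R}^d\to[0,\infty)$ such that for every $i$ and every fixed choice of the other $d-1$ coordinates, the function $x_i\mapsto f(x)$ belongs to $\mathcal{C}_1$. *)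

theory Defs
  imports "HOL-Analysis.Analysis" "HOL-Probability.Probability_Measure"
begin

definition compact_supp :: "('a::topological_space \<Rightarrow> real) \<Rightarrow> bool" where
  "compact_supp f \<longleftrightarrow> compact (closure {x. f x \<noteq> 0})"

definition C1 :: "(real \<Rightarrow> real) set" where
  "C1 = {g. continuous_on UNIV g \<and> compact_supp g \<and> (\<forall>t. g t \<ge> 0)
            \<and> (\<forall>c>0. convex {t. g t > c}) \<and> (\<forall>t. g t \<le> g 0)}"

definition upd_coord :: "real ^ 'n \<Rightarrow> 'n \<Rightarrow> real \<Rightarrow> real ^ 'n" where
  "upd_coord x i t = (\<chi> j. if j = i then t else x $ j)"

text \<open>The class bar C_d of the paper (d = CARD('n)).\<close>
definition Cbar :: "(real ^ 'n \<Rightarrow> real) set" where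
  "Cbar = {f. continuous_on UNIV f \<and> compact_supp f \<and> (\<forall>x. f x \<ge> 0)
            \<and> (\<forall>i x. (\<lambda>t. f (upd_coord x i t)) \<in> C1)}"

end

theory Submission
  imports Defs "HOL-Probability.Probability"
begin

(* The theorem is a correlation inequality of Chebyshev/Harris type:
   under a product measure with symmetric coordinate laws, a function that is
   unimodal in every coordinate (nonincreasing away from 0) and a function that
   is radially decreasing in every coordinate are positively correlated.

   1. In one dimension (correlation_1d): replacing a unimodal u by its even part
      changes neither E[u] nor E[u v] (the law is symmetric and v is even), and
      the even part is radially decreasing, hence ordered like v; Chebyshev's
      association inequality (chebyshev_association) finishes the argument.
   2. Tensorization (correlation_tensorize): by induction on the index set of a
      product measure, averaging out one coordinate preserves measurability,
      bounds and coordinatewise monotonicity, and Fubini reduces the step to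
      the one-dimensional inequality applied to the sections.
   3. The density prod_i rho_i(|x_i|) on real^'n is the image of the product of
      the one-dimensional densities (product_density_eq_distr_PiM), which gives
      the inequality on vectors (correlation_product_density).
   mainTheorem8 applies this to f in Cbar and to the indicator of B. *)

section \<open>One-dimensional correlation\<close>

definition between_zero :: "real \<Rightarrow> real \<Rightarrow> bool" where
  "between_zero s t \<longleftrightarrow> (0 \<le> s \<and> s \<le> t) \<or> (t \<le> s \<and> s \<le> 0)"

definition decreasing_wrt :: "(real \<Rightarrow> real \<Rightarrow> bool) \<Rightarrow> (real \<Rightarrow> real) \<Rightarrow> bool" where
  "decreasing_wrt R u \<longleftrightarrow> (\<forall>s t. R s t \<longrightarrow> u t \<le> u s)"

abbreviation unimodal :: "(real \<Rightarrow> real) \<Rightarrow> bool" where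
  "unimodal \<equiv> decreasing_wrt between_zero"

abbreviation radially_decreasing :: "(real \<Rightarrow> real) \<Rightarrow> bool" where
  "radially_decreasing \<equiv> decreasing_wrt (\<lambda>s t. \<bar>s\<bar> \<le> \<bar>t\<bar>)"

text \<open>Members of C1 are unimodal: their superlevel sets are intervals containing 0.\<close>
lemma C1_unimodal:
  assumes g: "g \<in> C1"
  shows "unimodal g"
  unfolding decreasing_wrt_def
proof (intro allI impI, rule ccontr)
  fix s t assume st: "between_zero s t" and "\<not> g t \<le> g s"
  then have lt: "g s < g t" by simp
  have nn: "\<And>x. g x \<ge> 0" and cv: "\<And>c. c > 0 \<Longrightarrow> convex {x. g x > c}" and mx: "\<And>x. g x \<le> g 0"
    using g by (auto simp: C1_def)
  define c where "c = (g s + g t) / 2"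
  have "c > 0" using nn[of s] lt by (simp add: c_def)
  then have "is_interval {x. g x > c}" using cv by (simp add: is_interval_convex_1)
  moreover have "g t > c" and "g 0 > c" using lt mx[of t] by (simp_all add: c_def)
  ultimately have "g s > c" using st unfolding is_interval_1 between_zero_def by blast
  then show False using lt by (simp add: c_def)
qed

lemma radially_decreasing_even:
  assumes "radially_decreasing v"
  shows "v (- t) = v t"
  using assms by (force simp: decreasing_wrt_def intro: antisym)

lemma even_part_radially_decreasing:
  assumes u: "unimodal u"
  shows "radially_decreasing (\<lambda>t. (u t + u (- t)) / 2)"
  unfolding decreasing_wrt_def
proof (intro allI impI)
  fix s t :: real assume st: "\<bar>s\<bar> \<le> \<bar>t\<bar>"
  have sym: "u r + u (- r) = u \<bar>r\<bar> + u (- \<bar>r\<bar>)" for r by (cases "r \<ge> 0") auto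
  have "u \<bar>t\<bar> \<le> u \<bar>s\<bar>" and "u (- \<bar>t\<bar>) \<le> u (- \<bar>s\<bar>)"
    using u st by (auto simp: decreasing_wrt_def between_zero_def)
  then show "(u t + u (- t)) / 2 \<le> (u s + u (- s)) / 2" using sym[of s] sym[of t] by simp
qed

lemma radially_decreasing_similar:
  assumes "radially_decreasing w" "radially_decreasing v"
  shows "0 \<le> (w s - w t) * (v s - v t)"
proof (cases "\<bar>s\<bar> \<le> \<bar>t\<bar>")
  case True then show ?thesis using assms by (auto simp: decreasing_wrt_def)
next
  case False then show ?thesis using assms
    by (auto simp: decreasing_wrt_def intro: mult_nonpos_nonpos)
qed

lemma abs_mult_bound:
  fixes a b :: real
  assumes "\<bar>a\<bar> \<le> C" "\<bar>b\<bar> \<le> D"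
  shows "\<bar>a * b\<bar> \<le> C * D"
  using assms by (auto simp: abs_mult intro!: mult_mono order_trans[OF abs_ge_zero])

lemma integrable_bounded:
  fixes f :: "'a \<Rightarrow> real"
  assumes "finite_measure M" "f \<in> borel_measurable M" "\<And>x. x \<in> space M \<Longrightarrow> \<bar>f x\<bar> \<le> C"
  shows "integrable M f"
  using finite_measure.integrable_const_bound[OF assms(1), of f C] assms(2,3) by (simp add: AE_I2)

text \<open>Chebyshev's association inequality: similarly ordered bounded random variables
  are positively correlated. The double integral of (w s - w t)(v s - v t) is
  2 (E[w v] - E[w] E[v]).\<close>
lemma chebyshev_association:
  fixes w v :: "'a \<Rightarrow> real"
  assumes P: "prob_space M"
    and wm: "w \<in> borel_measurable M" and vm: "v \<in> borel_measurable M"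
    and wb: "\<And>x. \<bar>w x\<bar> \<le> C" and vb: "\<And>x. \<bar>v x\<bar> \<le> D"
    and similar: "\<And>s t. s \<in> space M \<Longrightarrow> t \<in> space M \<Longrightarrow> 0 \<le> (w s - w t) * (v s - v t)"
  shows "(\<integral>x. w x \<partial>M) * (\<integral>x. v x \<partial>M) \<le> (\<integral>x. w x * v x \<partial>M)"
proof -
  interpret prob_space M by fact
  have iw: "integrable M w" using wm wb by (intro integrable_bounded) auto
  have iv: "integrable M v" using vm vb by (intro integrable_bounded) auto
  have iwv: "integrable M (\<lambda>x. w x * v x)"
    using wm vm wb vb by (intro integrable_bounded[of _ _ "C * D"]) (auto intro: abs_mult_bound)
  define a where "a = (\<integral>x. w x * v x \<partial>M)"
  define b where "b = (\<integral>x. w x \<partial>M)"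
  define c where "c = (\<integral>x. v x \<partial>M)"
  have inner: "(\<integral>s. (w s - w t) * (v s - v t) \<partial>M) = a - w t * c - v t * b + w t * v t" for t
  proof -
    have "(\<integral>s. (w s - w t) * (v s - v t) \<partial>M)
        = (\<integral>s. w s * v s - w t * v s - v t * w s + w t * v t \<partial>M)"
      by (simp add: algebra_simps)
    also have "\<dots> = a - w t * c - v t * b + w t * v t"
      using iwv iv iw by (simp add: a_def b_def c_def prob_space)
    finally show ?thesis .
  qed
  have "0 \<le> (\<integral>t. a - w t * c - v t * b + w t * v t \<partial>M)"
    using similar by (intro integral_nonneg_AE AE_I2) (auto simp: inner[symmetric])
  also have "\<dots> = 2 * (a - b * c)"
    using iwv iv iw by (simp add: a_def b_def c_def prob_space algebra_simps)
  finally show ?thesis by (simp add: a_def b_def c_def)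
qed

lemma integral_reflect:
  fixes h :: "real \<Rightarrow> real"
  assumes S: "sets M = sets borel" and sym: "distr M borel uminus = M"
    and hm: "h \<in> borel_measurable borel"
  shows "(\<integral>t. h (- t) \<partial>M) = (\<integral>t. h t \<partial>M)"
proof -
  have "(\<integral>t. h t \<partial>M) = (\<integral>t. h t \<partial>distr M borel uminus)" using sym by simp
  also have "\<dots> = (\<integral>t. h (- t) \<partial>M)"
    by (rule integral_distr) (simp_all add: measurable_cong_sets[OF S refl] hm)
  finally show ?thesis by simp
qed

lemma correlation_1d:
  fixes M :: "real measure" and u v :: "real \<Rightarrow> real"
  assumes P: "prob_space M" and S: "sets M = sets borel" and sym: "distr M borel uminus = M"
    and um: "u \<in> borel_measurable borel" and vm: "v \<in> borel_measurable borel"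
    and ub: "\<And>t. \<bar>u t\<bar> \<le> C" and vb: "\<And>t. \<bar>v t\<bar> \<le> D"
    and u_uni: "unimodal u" and v_rad: "radially_decreasing v"
  shows "(\<integral>t. u t \<partial>M) * (\<integral>t. v t \<partial>M) \<le> (\<integral>t. u t * v t \<partial>M)"
proof -
  interpret prob_space M by fact
  have meas: "measurable M = measurable borel" by (intro ext measurable_cong_sets) (simp_all add: S)
  have int: "integrable M h" if "h \<in> borel_measurable borel" "\<And>t. \<bar>h t\<bar> \<le> K"
    for h :: "real \<Rightarrow> real" and K
    using that by (intro integrable_bounded[of _ _ K]) (simp_all add: meas)
  define w where "w t = (u t + u (- t)) / 2" for t
  have wm: "w \<in> borel_measurable borel" using um unfolding w_def by measurable
  have wb: "\<bar>w t\<bar> \<le> C" for t using ub[of t] ub[of "- t"] unfolding w_def by auto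
  have w_rad: "radially_decreasing w"
    unfolding w_def by (rule even_part_radially_decreasing[OF u_uni])
  have cheb: "(\<integral>t. w t \<partial>M) * (\<integral>t. v t \<partial>M) \<le> (\<integral>t. w t * v t \<partial>M)"
    by (rule chebyshev_association[OF P _ _ wb vb radially_decreasing_similar[OF w_rad v_rad]])
       (simp_all add: meas wm vm)
  have iu: "integrable M u" and iu': "integrable M (\<lambda>t. u (- t))"
    using um ub by (auto intro!: int)
  have iuv: "integrable M (\<lambda>t. u t * v t)" and iuv': "integrable M (\<lambda>t. u (- t) * v (- t))"
    using um vm ub vb by (auto intro!: int[of _ "C * D"] abs_mult_bound)
  have "(\<integral>t. w t \<partial>M) = ((\<integral>t. u t \<partial>M) + (\<integral>t. u (- t) \<partial>M)) / 2"
    using iu iu' by (simp add: w_def)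
  also have "\<dots> = (\<integral>t. u t \<partial>M)" using integral_reflect[OF S sym um] by simp
  finally have w_int: "(\<integral>t. w t \<partial>M) = (\<integral>t. u t \<partial>M)" .
  have wv: "w t * v t = (u t * v t + u (- t) * v (- t)) / 2" for t
    using radially_decreasing_even[OF v_rad, of t] by (simp add: w_def algebra_simps)
  have "(\<integral>t. w t * v t \<partial>M) = (\<integral>t. (u t * v t + u (- t) * v (- t)) / 2 \<partial>M)"
    by (simp only: wv)
  also have "\<dots> = ((\<integral>t. u t * v t \<partial>M) + (\<integral>t. u (- t) * v (- t) \<partial>M)) / 2"
    using iuv iuv' by simp
  also have "\<dots> = (\<integral>t. u t * v t \<partial>M)"
    using integral_reflect[OF S sym, of "\<lambda>t. u t * v t"] um vm by simp
  finally show ?thesis using cheb w_int by simp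
qed

section \<open>Tensorization over finite products\<close>

definition coord_decreasing :: "(real \<Rightarrow> real \<Rightarrow> bool) \<Rightarrow> 'i set \<Rightarrow> (('i \<Rightarrow> real) \<Rightarrow> real) \<Rightarrow> bool"
  where "coord_decreasing R I F \<longleftrightarrow> (\<forall>x\<in>extensional I. \<forall>j\<in>I. decreasing_wrt R (\<lambda>t. F (x(j := t))))"

locale real_prob_family =
  fixes M :: "'i \<Rightarrow> real measure"
  assumes prob_M: "\<And>i. prob_space (M i)" and sets_M: "\<And>i. sets (M i) = sets borel"
begin

sublocale product_sigma_finite M
  by (simp add: product_sigma_finite_def prob_M prob_space_imp_sigma_finite)

lemma measurable_M: "measurable (M i) = measurable borel"
  by (intro ext measurable_cong_sets) (simp_all add: sets_M)

lemma space_PiM_extensional: "space (PiM I M) = extensional I"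
  using sets_eq_imp_space_eq[OF sets_M] by (auto simp: space_PiM PiE_def)

lemma finite_measure_PiM: "finite_measure (PiM I M)"
  using prob_space_PiM[OF prob_M] by (rule prob_space.finite_measure)

lemma section_measurable:
  fixes H :: "('i \<Rightarrow> real) \<Rightarrow> real"
  assumes "x \<in> extensional I" "i \<notin> I" "H \<in> borel_measurable (PiM (insert i I) M)"
  shows "(\<lambda>y. H (x(i := y))) \<in> borel_measurable borel"
proof -
  have "(\<lambda>y. x(i := y)) \<in> measurable (M i) (PiM (insert i I) M)"
    using assms(1,2) by (intro measurable_component_update) (simp add: space_PiM_extensional)
  from measurable_comp[OF this assms(3)] show ?thesis by (simp add: comp_def measurable_M)
qed

lemma section_integrable:
  fixes H :: "('i \<Rightarrow> real) \<Rightarrow> real"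
  assumes "x \<in> extensional I" "i \<notin> I" "H \<in> borel_measurable (PiM (insert i I) M)"
    and "\<And>z. \<bar>H z\<bar> \<le> K"
  shows "integrable (M i) (\<lambda>y. H (x(i := y)))"
  using section_measurable[OF assms(1-3)] assms(4)
  by (intro integrable_bounded[of _ _ K] prob_space.finite_measure prob_M) (simp_all add: measurable_M)

definition section_avg :: "'i \<Rightarrow> (('i \<Rightarrow> real) \<Rightarrow> real) \<Rightarrow> ('i \<Rightarrow> real) \<Rightarrow> real" where
  "section_avg i H x = (\<integral>y. H (x(i := y)) \<partial>M i)"

lemma section_avg_measurable:
  assumes "H \<in> borel_measurable (PiM (insert i I) M)"
  shows "section_avg i H \<in> borel_measurable (PiM I M)"
proof -
  have "(\<lambda>(x, y). H (x(i := y))) \<in> borel_measurable (PiM I M \<Otimes>\<^sub>M M i)"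
    using measurable_comp[OF measurable_add_dim assms] by (simp add: comp_def case_prod_beta')
  then show ?thesis unfolding section_avg_def
    using sigma_finite_measure.borel_measurable_lebesgue_integral[OF sigma_finite_measures]
    by simp
qed

lemma section_avg_bound:
  assumes "\<And>z. \<bar>H z\<bar> \<le> K"
  shows "\<bar>section_avg i H x\<bar> \<le> K"
proof (cases "integrable (M i) (\<lambda>y. H (x(i := y)))")
  case True
  interpret prob_space "M i" by (rule prob_M)
  have "\<bar>section_avg i H x\<bar> \<le> (\<integral>y. \<bar>H (x(i := y))\<bar> \<partial>M i)"
    unfolding section_avg_def by (rule integral_abs_bound)
  also have "\<dots> \<le> K" using True assms by (intro integral_le_const) auto
  finally show ?thesis .
next
  case False
  then show ?thesis using abs_ge_zero[of "H x"] assms[of x]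
    by (simp add: section_avg_def not_integrable_integral_eq)
qed

lemma integral_insert_section_avg:
  assumes "finite I" "i \<notin> I" "H \<in> borel_measurable (PiM (insert i I) M)" "\<And>z. \<bar>H z\<bar> \<le> K"
  shows "(\<integral>z. H z \<partial>PiM (insert i I) M) = (\<integral>x. section_avg i H x \<partial>PiM I M)"
  unfolding section_avg_def
  using assms by (intro product_integral_insert integrable_bounded[OF finite_measure_PiM]) auto

lemma section_avg_coord_decreasing:
  fixes H :: "('i \<Rightarrow> real) \<Rightarrow> real"
  assumes "i \<notin> I" "H \<in> borel_measurable (PiM (insert i I) M)" "\<And>z. \<bar>H z\<bar> \<le> K"
    and mono: "coord_decreasing R (insert i I) H"
  shows "coord_decreasing R I (section_avg i H)"
  unfolding coord_decreasing_def decreasing_wrt_def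
proof (intro ballI allI impI)
  fix x :: "'i \<Rightarrow> real" and j s t assume x: "x \<in> extensional I" and j: "j \<in> I" and st: "R s t"
  have xj: "x(j := r) \<in> extensional I" for r using x j by (auto simp: extensional_def)
  have ji: "j \<noteq> i" using j assms(1) by auto
  show "section_avg i H (x(j := t)) \<le> section_avg i H (x(j := s))"
    unfolding section_avg_def
  proof (rule integral_mono)
    show "integrable (M i) (\<lambda>y. H (x(j := t, i := y)))"
      and "integrable (M i) (\<lambda>y. H (x(j := s, i := y)))"
      by (rule section_integrable[OF xj assms(1-3)])+
    fix y
    have "x(i := y) \<in> extensional (insert i I)" using x by (auto simp: extensional_def)
    then have "H (x(i := y, j := t)) \<le> H (x(i := y, j := s))"
      using mono j st by (auto simp: coord_decreasing_def decreasing_wrt_def)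
    then show "H (x(j := t, i := y)) \<le> H (x(j := s, i := y))"
      using ji by (simp add: fun_upd_twist)
  qed
qed

theorem correlation_tensorize:
  fixes F G :: "('i \<Rightarrow> real) \<Rightarrow> real"
  assumes one_dim: "\<And>i u v C D. u \<in> borel_measurable borel \<Longrightarrow> v \<in> borel_measurable borel \<Longrightarrow>
        (\<And>t. \<bar>u t\<bar> \<le> C) \<Longrightarrow> (\<And>t. \<bar>v t\<bar> \<le> D) \<Longrightarrow> decreasing_wrt R u \<Longrightarrow> decreasing_wrt S v \<Longrightarrow>
        (\<integral>t. u t \<partial>M i) * (\<integral>t. v t \<partial>M i) \<le> (\<integral>t. u t * v t \<partial>M i)"
    and "finite I"
    and "F \<in> borel_measurable (PiM I M)" "G \<in> borel_measurable (PiM I M)"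
    and "\<And>x. \<bar>F x\<bar> \<le> C" "\<And>x. \<bar>G x\<bar> \<le> D"
    and "coord_decreasing R I F" "coord_decreasing S I G"
  shows "(\<integral>x. F x \<partial>PiM I M) * (\<integral>x. G x \<partial>PiM I M) \<le> (\<integral>x. F x * G x \<partial>PiM I M)"
  using assms(2-)
proof (induction I arbitrary: F G rule: finite_induct)
  case empty
  show ?case by (simp add: PiM_empty lebesgue_integral_count_space_finite)
next
  case (insert i I)
  note Fm = insert.prems(1) and Gm = insert.prems(2) and Fb = insert.prems(3) and Gb = insert.prems(4)
  have FGm: "(\<lambda>z. F z * G z) \<in> borel_measurable (PiM (insert i I) M)" using Fm Gm by measurable
  have FGb: "\<bar>F z * G z\<bar> \<le> C * D" for z using Fb Gb by (rule abs_mult_bound)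
  let ?F = "section_avg i F" and ?G = "section_avg i G" and ?FG = "section_avg i (\<lambda>z. F z * G z)"
  have F1m: "?F \<in> borel_measurable (PiM I M)" and G1m: "?G \<in> borel_measurable (PiM I M)"
    and FG1m: "?FG \<in> borel_measurable (PiM I M)"
    using Fm Gm FGm by (simp_all add: section_avg_measurable)
  have F1b: "\<bar>?F x\<bar> \<le> C" and G1b: "\<bar>?G x\<bar> \<le> D" and FG1b: "\<bar>?FG x\<bar> \<le> C * D" for x
    using Fb Gb FGb by (simp_all add: section_avg_bound)
  have IH: "(\<integral>x. ?F x \<partial>PiM I M) * (\<integral>x. ?G x \<partial>PiM I M) \<le> (\<integral>x. ?F x * ?G x \<partial>PiM I M)"
    using insert.hyps insert.prems
    by (intro insert.IH F1m G1m F1b G1b section_avg_coord_decreasing) auto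
  have "(\<integral>x. ?F x * ?G x \<partial>PiM I M) \<le> (\<integral>x. ?FG x \<partial>PiM I M)"
  proof (rule integral_mono)
    show "integrable (PiM I M) (\<lambda>x. ?F x * ?G x)"
      using F1m G1m
      by (intro integrable_bounded[OF finite_measure_PiM, where C = "C * D"] abs_mult_bound F1b G1b) auto
    show "integrable (PiM I M) ?FG" by (rule integrable_bounded[OF finite_measure_PiM FG1m FG1b])
    fix x assume "x \<in> space (PiM I M)"
    then have x: "x \<in> extensional I" "x \<in> extensional (insert i I)"
      by (auto simp: space_PiM_extensional intro: extensional_subset)
    show "?F x * ?G x \<le> ?FG x" unfolding section_avg_def
      using insert.prems(5,6) x
      by (intro one_dim[where C = C and D = D] section_measurable[OF x(1) insert.hyps(2)] Fm Gm Fb Gb)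
         (auto simp: coord_decreasing_def)
  qed
  then show ?case
    using IH integral_insert_section_avg[OF insert.hyps Fm Fb] integral_insert_section_avg[OF insert.hyps Gm Gb]
      integral_insert_section_avg[OF insert.hyps FGm FGb]
    by simp
qed

end

section \<open>Product densities on real vectors\<close>

lemma vec_lambda_measurable:
  "(\<lambda>g. (\<chi> i. g i) :: real ^ 'n) \<in> measurable (PiM (UNIV::'n::finite set) (\<lambda>_. lborel)) borel"
proof (subst borel_measurable_euclidean_space, intro ballI)
  fix b :: "real ^ 'n" assume "b \<in> Basis"
  then obtain j where b: "b = axis j 1" by (auto simp: Basis_vec_def)
  have "(\<lambda>g. (\<chi> i. g i) \<bullet> b) = (\<lambda>g. g j)" by (auto simp: b inner_axis)
  then show "(\<lambda>g. ((\<chi> i. g i) :: real ^ 'n) \<bullet> b) \<in> borel_measurable (PiM UNIV (\<lambda>_. lborel))"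
    by simp
qed

lemma lborel_vec_eq_PiM:
  "(lborel :: (real ^ 'n::finite) measure) = distr (PiM UNIV (\<lambda>_. lborel)) borel (\<lambda>g. \<chi> i. g i)"
proof (rule lborel_eqI)
  interpret product_sigma_finite "\<lambda>_::'n. lborel :: real measure"
    by standard
  fix l u :: "real ^ 'n" assume le: "\<And>b. b \<in> Basis \<Longrightarrow> l \<bullet> b \<le> u \<bullet> b"
  have le': "l $ i \<le> u $ i" for i using le[of "axis i 1"] by (auto simp: Basis_vec_def inner_axis)
  have pre: "(\<lambda>g. \<chi> i. g i) -` box l u \<inter> space (PiM UNIV (\<lambda>_::'n. lborel))
      = PiE UNIV (\<lambda>i. {l $ i <..< u $ i})"
    by (auto simp: mem_box_cart space_PiM PiE_def Pi_iff)
  have "emeasure (distr (PiM UNIV (\<lambda>_. lborel)) borel (\<lambda>g. \<chi> i. g i)) (box l u)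
      = emeasure (PiM UNIV (\<lambda>_. lborel)) (PiE UNIV (\<lambda>i. {l $ i <..< u $ i}))"
    by (subst emeasure_distr) (auto simp: pre vec_lambda_measurable)
  also have "\<dots> = (\<Prod>i\<in>UNIV. ennreal (u $ i - l $ i))"
    using le' by (subst emeasure_PiM) auto
  also have "\<dots> = ennreal (\<Prod>b\<in>Basis. (u - l) \<bullet> b)"
    using le' by (simp add: prod_ennreal Basis_vec_def cart_eq_inner_axis axis_eq_axis
        prod.UNION_disjoint inner_diff_left)
  finally show "emeasure (distr (PiM UNIV (\<lambda>_. lborel)) borel (\<lambda>g. \<chi> i. g i)) (box l u)
      = (\<Prod>b\<in>Basis. (u - l) \<bullet> b)" by simp
qed simp

lemma density_PiM_lborel:
  fixes r :: "'n::finite \<Rightarrow> real \<Rightarrow> real"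
  assumes rm: "\<And>i. r i \<in> borel_measurable borel"
    and P: "\<And>i. prob_space (density lborel (\<lambda>t. ennreal (r i t)))"
  shows "density (PiM UNIV (\<lambda>_. lborel)) (\<lambda>g. \<Prod>i\<in>UNIV. ennreal (r i (g i)))
       = PiM UNIV (\<lambda>i. density lborel (\<lambda>t. ennreal (r i t)))"
proof -
  interpret product_sigma_finite "\<lambda>i. density lborel (\<lambda>t. ennreal (r i t))"
    by (simp add: product_sigma_finite_def P prob_space_imp_sigma_finite)
  interpret L: product_sigma_finite "\<lambda>_::'n. lborel :: real measure"
    by standard
  show ?thesis
  proof (rule PiM_eqI)
    fix A assume "\<And>i. i \<in> UNIV \<Longrightarrow> A i \<in> sets (density lborel (\<lambda>t. ennreal (r i t)))"
    then have A: "A i \<in> sets borel" for i by simp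
    have "emeasure (density (PiM UNIV (\<lambda>_. lborel)) (\<lambda>g. \<Prod>i\<in>UNIV. ennreal (r i (g i)))) (PiE UNIV A)
        = (\<integral>\<^sup>+ g. (\<Prod>i\<in>UNIV. ennreal (r i (g i))) * indicator (PiE UNIV A) g \<partial>PiM UNIV (\<lambda>_. lborel))"
      using rm A by (intro emeasure_density) (measurable, auto intro: sets_PiM_I_finite)
    also have "\<dots> = (\<integral>\<^sup>+ g. (\<Prod>i\<in>UNIV. ennreal (r i (g i)) * indicator (A i) (g i)) \<partial>PiM UNIV (\<lambda>_. lborel))"
      by (intro nn_integral_cong) (auto simp: prod.distrib indicator_def PiE_def Pi_iff)
    also have "\<dots> = (\<Prod>i\<in>UNIV. \<integral>\<^sup>+ t. ennreal (r i t) * indicator (A i) t \<partial>lborel)"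
      using rm A by (intro L.product_nn_integral_prod) auto
    also have "\<dots> = (\<Prod>i\<in>UNIV. emeasure (density lborel (\<lambda>t. ennreal (r i t))) (A i))"
      using rm A by (intro prod.cong refl emeasure_density[symmetric]) auto
    finally show "emeasure (density (PiM UNIV (\<lambda>_. lborel)) (\<lambda>g. \<Prod>i\<in>UNIV. ennreal (r i (g i)))) (PiE UNIV A)
        = (\<Prod>i\<in>UNIV. emeasure (density lborel (\<lambda>t. ennreal (r i t))) (A i))" .
  qed (simp_all cong: sets_PiM_cong)
qed

lemma product_density_eq_distr_PiM:
  fixes r :: "'n::finite \<Rightarrow> real \<Rightarrow> real"
  assumes rm: "\<And>i. r i \<in> borel_measurable borel" and rn: "\<And>i t. 0 \<le> r i t"
    and P: "\<And>i. prob_space (density lborel (\<lambda>t. ennreal (r i t)))"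
  shows "density lborel (\<lambda>x :: real ^ 'n. ennreal (\<Prod>i\<in>UNIV. r i (x $ i)))
       = distr (PiM UNIV (\<lambda>i. density lborel (\<lambda>t. ennreal (r i t)))) borel (\<lambda>g. \<chi> i. g i)"
proof -
  have hm: "(\<lambda>x :: real ^ 'n. ennreal (\<Prod>i\<in>UNIV. r i (x $ i))) \<in> borel_measurable borel"
    using rm by measurable
  have "density lborel (\<lambda>x :: real ^ 'n. ennreal (\<Prod>i\<in>UNIV. r i (x $ i)))
      = distr (density (PiM UNIV (\<lambda>_. lborel)) (\<lambda>g. ennreal (\<Prod>i\<in>UNIV. r i (g i)))) borel (\<lambda>g. \<chi> i. g i)"
    by (subst lborel_vec_eq_PiM) (simp add: density_distr[OF hm vec_lambda_measurable])
  then show ?thesis by (simp add: density_PiM_lborel[OF rm P, symmetric] prod_ennreal rn)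
qed

lemma density_reflection_invariant:
  fixes g :: "real \<Rightarrow> real"
  assumes gm: "g \<in> borel_measurable borel" and even: "\<And>t. g (- t) = g t"
  shows "distr (density lborel (\<lambda>t. ennreal (g t))) borel uminus = density lborel (\<lambda>t. ennreal (g t))"
proof -
  have "density (distr lborel borel uminus) (\<lambda>t. ennreal (g t))
      = distr (density lborel (\<lambda>x. ennreal (g (- x)))) borel uminus"
    using gm by (intro density_distr) auto
  then show ?thesis using even by (simp add: lborel_distr_uminus)
qed

lemma upd_coord_vec_lambda: "(\<chi> i. (x(j := t)) i) = upd_coord (\<chi> i. x i) j t"
  by (simp add: upd_coord_def vec_eq_iff)

theorem correlation_product_density:
  fixes r :: "'n::finite \<Rightarrow> real \<Rightarrow> real" and f g :: "real ^ 'n \<Rightarrow> real"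
  assumes rm: "\<And>i. r i \<in> borel_measurable borel" and rn: "\<And>i t. 0 \<le> r i t"
    and r_even: "\<And>i t. r i (- t) = r i t"
    and r_prob: "\<And>i. prob_space (density lborel (\<lambda>t. ennreal (r i t)))"
    and fm: "f \<in> borel_measurable borel" and gm: "g \<in> borel_measurable borel"
    and fb: "\<And>x. \<bar>f x\<bar> \<le> C" and gb: "\<And>x. \<bar>g x\<bar> \<le> D"
    and f_uni: "\<And>x i. unimodal (\<lambda>t. f (upd_coord x i t))"
    and g_rad: "\<And>x i. radially_decreasing (\<lambda>t. g (upd_coord x i t))"
  defines "\<mu> \<equiv> density lborel (\<lambda>x. ennreal (\<Prod>i\<in>UNIV. r i (x $ i)))"
  shows "(\<integral>x. f x \<partial>\<mu>) * (\<integral>x. g x \<partial>\<mu>) \<le> (\<integral>x. f x * g x \<partial>\<mu>)"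
proof -
  define M where "M i = density lborel (\<lambda>t. ennreal (r i t))" for i
  define V where "V y = ((\<chi> i. y i) :: real ^ 'n)" for y
  interpret real_prob_family M
    by (simp add: real_prob_family_def M_def r_prob)
  have sets_eq: "sets (PiM UNIV M) = sets (PiM UNIV (\<lambda>_. lborel))"
    by (simp add: sets_M cong: sets_PiM_cong)
  have Vm: "V \<in> borel_measurable (PiM UNIV M)"
    unfolding V_def measurable_cong_sets[OF sets_eq refl] by (rule vec_lambda_measurable)
  have \<mu>: "\<mu> = distr (PiM UNIV M) borel V"
    unfolding \<mu>_def M_def V_def by (rule product_density_eq_distr_PiM[OF rm rn r_prob])
  have one_dim: "(\<integral>t. u t \<partial>M i) * (\<integral>t. v t \<partial>M i) \<le> (\<integral>t. u t * v t \<partial>M i)"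
    if "u \<in> borel_measurable borel" "v \<in> borel_measurable borel" "\<And>t. \<bar>u t\<bar> \<le> C'"
      "\<And>t. \<bar>v t\<bar> \<le> D'" "unimodal u" "radially_decreasing v" for i u v C' D'
    using that unfolding M_def
    by (intro correlation_1d[OF r_prob] density_reflection_invariant rm r_even) auto
  have "(\<integral>y. f (V y) \<partial>PiM UNIV M) * (\<integral>y. g (V y) \<partial>PiM UNIV M) \<le> (\<integral>y. f (V y) * g (V y) \<partial>PiM UNIV M)"
  proof (rule correlation_tensorize[OF one_dim])
    show "coord_decreasing between_zero UNIV (\<lambda>y. f (V y))"
      and "coord_decreasing (\<lambda>s t. \<bar>s\<bar> \<le> \<bar>t\<bar>) UNIV (\<lambda>y. g (V y))"
      using f_uni g_rad by (simp_all add: coord_decreasing_def V_def upd_coord_vec_lambda)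
  qed (use Vm fm gm fb gb in auto)
  then show ?thesis
    unfolding \<mu> using Vm fm gm by (simp add: integral_distr)
qed

lemma compact_supp_bounded:
  fixes f :: "'a::topological_space \<Rightarrow> real"
  assumes "continuous_on UNIV f" "compact_supp f"
  obtains C where "\<And>x. \<bar>f x\<bar> \<le> C"
proof -
  let ?K = "closure {x. f x \<noteq> 0}"
  have "compact (f ` ?K)"
    using assms by (intro compact_continuous_image continuous_on_subset[OF assms(1)])
      (auto simp: compact_supp_def)
  then have "bounded (insert 0 (f ` ?K))" by (simp add: compact_imp_bounded)
  moreover have "range f \<subseteq> insert 0 (f ` ?K)" using closure_subset by fastforce
  ultimately have "bounded (range f)" by (rule bounded_subset)
  then show ?thesis using that by (auto simp: bounded_real)
qed

lemma sublevel_indicator_radially_decreasing: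
  fixes \<phi> :: "'n::finite \<Rightarrow> real \<Rightarrow> real"
  assumes mono: "\<And>i. mono_on {0..} (\<phi> i)"
  shows "radially_decreasing
           (\<lambda>t. indicator {x. (\<Sum>i\<in>UNIV. \<phi> i \<bar>x $ i\<bar>) \<le> c} (upd_coord y j t) :: real)"
  unfolding decreasing_wrt_def
proof (intro allI impI)
  fix s t :: real assume st: "\<bar>s\<bar> \<le> \<bar>t\<bar>"
  have "(\<Sum>i\<in>UNIV. \<phi> i \<bar>upd_coord y j s $ i\<bar>) \<le> (\<Sum>i\<in>UNIV. \<phi> i \<bar>upd_coord y j t $ i\<bar>)"
    using st by (intro sum_mono) (auto simp: upd_coord_def intro: mono_onD[OF mono])
  then show "indicator {x. (\<Sum>i\<in>UNIV. \<phi> i \<bar>x $ i\<bar>) \<le> c} (upd_coord y j t)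
      \<le> (indicator {x. (\<Sum>i\<in>UNIV. \<phi> i \<bar>x $ i\<bar>) \<le> c} (upd_coord y j s) :: real)"
    by (auto simp: indicator_def)
qed

theorem mainTheorem8:
  fixes \<rho> \<phi> :: "'n::finite \<Rightarrow> real \<Rightarrow> real" and f :: "real ^ 'n \<Rightarrow> real"
  assumes rho_cont: "\<And>i. continuous_on {0..} (\<rho> i)"
      and rho_pos: "\<And>i t. t \<ge> 0 \<Longrightarrow> \<rho> i t > 0"
      and rho_prob: "\<And>i. prob_space (density lborel (\<lambda>t. ennreal (\<rho> i \<bar>t\<bar>)))"
      and phi_cont: "\<And>i. continuous_on {0..} (\<phi> i)"
      and phi_mono: "\<And>i. strict_mono_on {0..} (\<phi> i)"
      and phi_nonneg: "\<And>i t. t \<ge> 0 \<Longrightarrow> \<phi> i t \<ge> 0"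
      and phi0: "\<And>i. \<phi> i 0 = 0"
      and f: "f \<in> Cbar"
  defines "\<mu> \<equiv> density lborel (\<lambda>x. ennreal (\<Prod>i\<in>UNIV. \<rho> i \<bar>x $ i\<bar>))"
      and "B \<equiv> {x :: real ^ 'n. (\<Sum>i\<in>UNIV. \<phi> i \<bar>x $ i\<bar>) \<le> 1}"
  shows "(\<integral>x. f x * indicator B x \<partial>\<mu>) \<ge> (\<integral>x. f x \<partial>\<mu>) * measure \<mu> B"
proof -
  have abs_cont: "continuous_on UNIV (\<lambda>t. h \<bar>t\<bar>)" if "continuous_on {0..} h" for h :: "real \<Rightarrow> real"
    using that by (rule continuous_on_compose2[OF _ continuous_on_rabs[OF continuous_on_id]]) auto
  have \<rho>m: "(\<lambda>t. \<rho> i \<bar>t\<bar>) \<in> borel_measurable borel" for i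
    by (rule borel_measurable_continuous_onI[OF abs_cont[OF rho_cont]])
  have \<phi>m: "(\<lambda>t. \<phi> i \<bar>t\<bar>) \<in> borel_measurable borel" for i
    by (rule borel_measurable_continuous_onI[OF abs_cont[OF phi_cont]])
  have fc: "continuous_on UNIV f" and f_supp: "compact_supp f"
    and f_C1: "\<And>x i. (\<lambda>t. f (upd_coord x i t)) \<in> C1"
    using f by (auto simp: Cbar_def)
  obtain C where fb: "\<And>x. \<bar>f x\<bar> \<le> C" using compact_supp_bounded[OF fc f_supp] by blast
  have Bm: "B \<in> sets borel" unfolding B_def using \<phi>m by measurable
  have "(\<integral>x. f x \<partial>\<mu>) * (\<integral>x. indicator B x \<partial>\<mu>) \<le> (\<integral>x. f x * indicator B x \<partial>\<mu>)"
    unfolding \<mu>_def B_def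
  proof (rule correlation_product_density[where r = "\<lambda>i t. \<rho> i \<bar>t\<bar>" and C = C and D = 1])
    show "unimodal (\<lambda>t. f (upd_coord x i t))" for x i by (rule C1_unimodal[OF f_C1])
    show "radially_decreasing (\<lambda>t. indicator {x. (\<Sum>i\<in>UNIV. \<phi> i \<bar>x $ i\<bar>) \<le> 1} (upd_coord x j t) :: real)"
      for x j using phi_mono by (intro sublevel_indicator_radially_decreasing strict_mono_on_imp_mono_on)
  qed (use \<rho>m rho_pos rho_prob borel_measurable_continuous_onI[OF fc] Bm[unfolded B_def] fb
       in \<open>auto simp: less_imp_le\<close>)
  then show ?thesis using Bm by (simp add: \<mu>_def)
qed

end
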